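(* Let $d\ge 2$ and let $f(t,s)=s^d+\sum_{i=1}^{d}\binom{x_i}{i}t^{i}s^{d-i}$, where $x_i\ge i-1$ are real numbers with $\binom{x_i}{i}>0$ for all $i$, and suppose $x_d\ge d$. If $f(t,s)$ is Lorentzian, then $x_1\ge x_2\ge\cdots\ge x_d$.
   Context: For real $x$ and integer $k\ge0$, $\binom{x}{k}=\frac{x(x-1)\cdots(x-k+1)}{k!}$. A homogeneous polynomial $p$ of degree $d\ge2$ in variables $z_1,\dots,z_n$ with nonnegative real coefficients is Lorentzian if its support (the set of exponent vectors of monomials with nonzero coefficient) is M-convex, and for every $\alpha\in\mathbb{Z}_{\ge0}^n$ with $|\alpha|=d-2$ the quadratic form $\partial^{\alpha}p$ has at most one positive eigenvalue. (For bivariate $p=\sum_{i=0}^d a_i t^i s^{d-i}$ with $a_i\ge0$, this is equivalent to the sequence $(a_i)$ having no internal zeros and satisfying $\big(a_i/\binom{d}{i}\big)^2\ge \frac{a_{i-1}}{\binom{d}{i-1}}\frac{a_{i+1}}{\binom{d}{i+1}}$ for $1\le i\le d-1$.) *)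

theory Defs
  imports "HOL-Analysis.Analysis" "HOL-Computational_Algebra.Polynomial"
begin

text \<open>A homogeneous bivariate form of degree d is represented by its coefficient
  sequence a, where a i is the coefficient of t^i s^(d-i), for i = 0..d.
  Exponent vectors are pairs (exponent of t, exponent of s).\<close>

definition support2 :: "nat \<Rightarrow> (nat \<Rightarrow> real) \<Rightarrow> (nat \<times> nat) set" where
  "support2 d a = {(i, d - i) | i. i \<le> d \<and> a i \<noteq> 0}"

text \<open>M-convexity of a set of exponent vectors in two variables (exchange axiom;
  with two variables the index j must be the other coordinate).\<close>
definition M_convex2 :: "(nat \<times> nat) set \<Rightarrow> bool" where
  "M_convex2 J \<longleftrightarrow> (\<forall>\<alpha>\<in>J. \<forall>\<beta>\<in>J.
      (fst \<alpha> > fst \<beta> \<longrightarrow> snd \<alpha> < snd \<beta> \<and> (fst \<alpha> - 1, snd \<alpha> + 1) \<in> J) \<and>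
      (snd \<alpha> > snd \<beta> \<longrightarrow> fst \<alpha> < fst \<beta> \<and> (fst \<alpha> + 1, snd \<alpha> - 1) \<in> J))"

text \<open>Falling factorial n(n-1)...(n-j+1), the constant from differentiating z^n j times.\<close>
definition falling :: "nat \<Rightarrow> nat \<Rightarrow> real" where
  "falling n j = (\<Prod>l<j. real (n - l))"

text \<open>Coefficient of t^i s^(d-i) in the (j,k)-th partial derivative (d/dt)^j (d/ds)^k p;
  the result has monomial t^(i-j) s^(d-i-k).\<close>
definition deriv_coeff :: "nat \<Rightarrow> (nat \<Rightarrow> real) \<Rightarrow> nat \<Rightarrow> nat \<Rightarrow> nat \<Rightarrow> real" where
  "deriv_coeff d a j k i = a i * falling i j * falling (d - i) k"

text \<open>The symmetric matrix of the quadratic form obtained as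
  (d/dt)^j (d/ds)^(d-2-j) p = A t^2 + B t s + C s^2, namely [[A, B/2], [B/2, C]].\<close>
definition quad_matrix :: "nat \<Rightarrow> (nat \<Rightarrow> real) \<Rightarrow> nat \<Rightarrow> real^2^2" where
  "quad_matrix d a j =
     (let k = d - 2 - j;
          A = deriv_coeff d a j k (j + 2);
          B = deriv_coeff d a j k (j + 1);
          C = deriv_coeff d a j k j
      in \<chi> r c. if r = 1 \<and> c = 1 then A else if r = 2 \<and> c = 2 then C else B / 2)"

definition charpoly2 :: "real^2^2 \<Rightarrow> real poly" where
  "charpoly2 M = [: M$1$1 * M$2$2 - M$1$2 * M$2$1, - (M$1$1 + M$2$2), 1 :]"

definition num_pos_eigenvalues2 :: "real^2^2 \<Rightarrow> nat" where
  "num_pos_eigenvalues2 M = (\<Sum>r\<in>{r. r > 0 \<and> poly (charpoly2 M) r = 0}. order r (charpoly2 M))"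

definition lorentzian2 :: "nat \<Rightarrow> (nat \<Rightarrow> real) \<Rightarrow> bool" where
  "lorentzian2 d a \<longleftrightarrow> 2 \<le> d \<and> (\<forall>i\<le>d. 0 \<le> a i) \<and> M_convex2 (support2 d a) \<and>
     (\<forall>j\<le>d - 2. num_pos_eigenvalues2 (quad_matrix d a j) \<le> 1)"

end

theory Submission
  imports Defs
begin

text \<open>Put b_i = a_i i! (d - i)! = d! a_i / (d choose i). The quadratic derivative
  (d/dt)^j (d/ds)^(d-2-j) f has matrix [[b_{j+2}, b_{j+1}], [b_{j+1}, b_j]] / 2 with nonnegative
  diagonal, so having at most one positive eigenvalue forces b_j b_{j+2} \<le> b_{j+1}^2.
  Here b_i = x_i (x_i - 1) ... (x_i - i + 1) (d - i)!, so b_0 = d! \<le> b_d as x_d \<ge> d. A positive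
  log-concave sequence is bounded below by its smaller endpoint, hence b_i \<ge> d! and x_i \<ge> d
  for all i. Finally log-concavity gives b_{i+1}^i b_0 \<le> b_i^{i+1}, and comparing falling
  factorials shows that this fails when d \<le> x_i < x_{i+1}.\<close>

definition ffact :: "real \<Rightarrow> nat \<Rightarrow> real" where
  "ffact y n = (\<Prod>l<n. y - real l)"

lemma ffact_0 [simp]: "ffact y 0 = 1"
  unfolding ffact_def by simp

lemma ffact_Suc: "ffact y (Suc n) = ffact y n * (y - real n)"
  unfolding ffact_def by simp

lemma gbinomial_mult_fact_eq_ffact: "(y gchoose n) * fact n = ffact y n"
  unfolding ffact_def gbinomial_mult_fact' atLeast0LessThan ..

lemma falling_eq_ffact: "j \<le> n \<Longrightarrow> falling n j = ffact (real n) j"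
  unfolding falling_def ffact_def by (intro prod.cong) (auto simp: of_nat_diff)

lemma ffact_of_nat_mult_fact: "k \<le> n \<Longrightarrow> ffact (real n) k * fact (n - k) = fact n"
proof -
  assume "k \<le> n"
  then have "fact k * fact (n - k) * real (n choose k) = fact n"
    by (metis binomial_fact_lemma of_nat_fact of_nat_mult)
  then show ?thesis
    by (metis binomial_gbinomial gbinomial_mult_fact_eq_ffact mult.commute mult.left_commute)
qed

lemma ffact_pos: "real n - 1 < y \<Longrightarrow> 0 < ffact y n"
  unfolding ffact_def by (rule prod_pos) auto

lemma ffact_mono: "real n - 1 \<le> y \<Longrightarrow> y \<le> z \<Longrightarrow> ffact y n \<le> ffact z n"
  unfolding ffact_def by (rule prod_mono) auto

lemma ffact_strict_mono:
  assumes "1 \<le> n" "real n - 1 \<le> y" "y < z"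
  shows "ffact y n < ffact z n"
proof -
  obtain m where n: "n = Suc m" using assms(1) by (cases n) auto
  have "ffact y m \<le> ffact z m" using assms n by (intro ffact_mono) auto
  moreover have "0 < ffact z m" using assms n by (intro ffact_pos) auto
  moreover have "0 \<le> y - m" "y - m < z - m" using assms n by auto
  ultimately have "ffact y m * (y - m) < ffact z m * (z - m)"
    by (meson le_less_trans mult_right_mono mult_strict_left_mono)
  then show ?thesis unfolding n ffact_Suc .
qed

text \<open>Each factor satisfies (y - l)(c - i) \<le> (y - i)(c - l) for l \<le> i, since the difference
  is (i - l)(c - y).\<close>
lemma ffact_mult_power_le:
  assumes "c \<le> y" "real i < c" "n \<le> i"
  shows "ffact y n * (c - real i) ^ n \<le> (y - real i) ^ n * ffact c n"
  using assms(3)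
proof (induction n)
  case 0
  then show ?case by (simp add: ffact_def)
next
  case (Suc n)
  then have IH: "ffact y n * (c - real i) ^ n \<le> (y - real i) ^ n * ffact c n" by simp
  have "0 \<le> ffact y n" using Suc assms by (intro less_imp_le ffact_pos) auto
  then have lhs_nonneg: "0 \<le> ffact y n * (c - real i) ^ n" using assms by simp
  have factor_nonneg: "0 \<le> (y - n) * (c - real i)" using assms Suc by simp
  have "(y - n) * (c - real i) - (y - real i) * (c - real n) = (real i - real n) * (c - y)"
    by (simp add: algebra_simps)
  also have "\<dots> \<le> 0" using Suc assms by (intro mult_nonneg_nonpos) auto
  finally have factor: "(y - n) * (c - real i) \<le> (y - real i) * (c - real n)" by simp
  have "ffact y (Suc n) * (c - real i) ^ Suc n = (ffact y n * (c - real i) ^ n) * ((y - n) * (c - real i))"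
    by (simp add: ffact_Suc algebra_simps)
  also have "\<dots> \<le> ((y - real i) ^ n * ffact c n) * ((y - real i) * (c - real n))"
    using IH factor lhs_nonneg factor_nonneg by (meson mult_mono order_trans)
  also have "\<dots> = (y - real i) ^ Suc n * ffact c (Suc n)"
    by (simp add: ffact_Suc algebra_simps)
  finally show ?case .
qed

lemma two_le_num_pos_eigenvalues2_if_factors:
  assumes factors: "charpoly2 M = [:-r1, 1:] * [:-r2, 1:]" and "0 < r1" "0 < r2"
  shows "2 \<le> num_pos_eigenvalues2 M"
proof -
  let ?p = "charpoly2 M"
  let ?S = "{r. r > 0 \<and> poly ?p r = 0}"
  have "?p \<noteq> 0" unfolding charpoly2_def by simp
  then have "finite ?S" by (rule poly_roots_finite[THEN rev_finite_subset]) auto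
  have roots: "r1 \<in> ?S" "r2 \<in> ?S" using assms by simp_all
  have "order r ?p = order r [:-r1, 1:] + order r [:-r2, 1:]" for r
    using \<open>?p \<noteq> 0\<close> unfolding factors by (rule order_mult)
  moreover have "order r [:-r, 1:] = 1" for r :: real using order_power_n_n[of r 1] by simp
  ultimately have orders: "order r1 ?p \<ge> 1" "order r2 ?p \<ge> 1" "r1 = r2 \<Longrightarrow> order r1 ?p = 2"
    by simp_all
  have "(\<Sum>r\<in>{r1, r2}. order r ?p) \<le> num_pos_eigenvalues2 M"
    unfolding num_pos_eigenvalues2_def by (rule sum_mono2) (use \<open>finite ?S\<close> roots in auto)
  with orders show ?thesis by (cases "r1 = r2") auto
qed

lemma two_le_num_pos_eigenvalues2_if_pos_def:
  assumes sym: "M$1$2 = M$2$1" and "0 \<le> M$1$1" "0 \<le> M$2$2" and det: "(M$1$2)^2 < M$1$1 * M$2$2"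
  shows "2 \<le> num_pos_eigenvalues2 M"
proof -
  define A B C where "A = M$1$1" and "B = M$1$2" and "C = M$2$2"
  define D where "D = (A - C)^2 + 4 * B^2"
  have "0 \<le> D" unfolding D_def by simp
  have "0 < A * C" using det unfolding A_def B_def C_def by (smt (verit) zero_le_power2)
  then have "0 < A + C" using assms(2,3) unfolding A_def C_def by (auto simp: zero_less_mult_iff)
  have "D < (A + C)^2" using det unfolding D_def A_def B_def C_def by (simp add: power2_eq_square algebra_simps)
  then have "sqrt D < A + C" using \<open>0 < A + C\<close> by (metis abs_of_pos real_sqrt_abs real_sqrt_less_iff)
  define r1 r2 where "r1 = (A + C + sqrt D) / 2" and "r2 = (A + C - sqrt D) / 2"
  have "0 < r1" "0 < r2" unfolding r1_def r2_def using \<open>0 \<le> D\<close> \<open>0 < A + C\<close> \<open>sqrt D < A + C\<close>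
    by (auto intro: add_pos_nonneg)
  have sum: "r1 + r2 = A + C" unfolding r1_def r2_def by (simp add: field_simps)
  have "r1 * r2 = ((A + C)^2 - (sqrt D)^2) / 4" unfolding r1_def r2_def by (simp add: power2_eq_square algebra_simps)
  also have "\<dots> = A * C - B^2" using \<open>0 \<le> D\<close> unfolding D_def by (simp add: power2_eq_square field_simps)
  finally have "charpoly2 M = [:-r1, 1:] * [:-r2, 1:]"
    unfolding charpoly2_def sym[symmetric] A_def[symmetric] B_def[symmetric] C_def[symmetric]
    using sum by (simp add: power2_eq_square mult.commute)
  from this \<open>0 < r1\<close> \<open>0 < r2\<close> show ?thesis by (rule two_le_num_pos_eigenvalues2_if_factors)
qed

lemma falling_eq_fact_div: "j \<le> n \<Longrightarrow> falling n j = fact n / fact (n - j)"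
  by (simp add: falling_eq_ffact ffact_of_nat_mult_fact[symmetric])

definition scaled_coeff :: "nat \<Rightarrow> (nat \<Rightarrow> real) \<Rightarrow> nat \<Rightarrow> real" where
  "scaled_coeff d a i = a i * fact i * fact (d - i)"

lemma deriv_coeff_eq_scaled_coeff:
  assumes "j \<le> i" "i + k \<le> d"
  shows "deriv_coeff d a j k i = scaled_coeff d a i / (fact (i - j) * fact (d - i - k))"
  using assms by (simp add: deriv_coeff_def scaled_coeff_def falling_eq_fact_div)

lemma lorentzian2_log_concave:
  assumes lor: "lorentzian2 d a" and "j + 2 \<le> d"
  shows "scaled_coeff d a j * scaled_coeff d a (j + 2) \<le> (scaled_coeff d a (j + 1))^2"
proof -
  let ?M = "quad_matrix d a j"
  let ?b = "scaled_coeff d a"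
  have entries: "?M$1$1 = ?b (j + 2) / 2" "?M$2$2 = ?b j / 2"
    "?M$1$2 = ?b (j + 1) / 2" "?M$2$1 = ?b (j + 1) / 2"
    using \<open>j + 2 \<le> d\<close>
    by (simp_all add: quad_matrix_def Let_def deriv_coeff_eq_scaled_coeff numeral_2_eq_2)
  have "?b i \<ge> 0" if "i \<le> d" for i
    using lor that unfolding lorentzian2_def scaled_coeff_def by simp
  then have "0 \<le> ?M$1$1" "0 \<le> ?M$2$2" unfolding entries using \<open>j + 2 \<le> d\<close> by simp_all
  moreover have "num_pos_eigenvalues2 ?M \<le> 1" using lor \<open>j + 2 \<le> d\<close> unfolding lorentzian2_def by simp
  ultimately have "\<not> (?M$1$2)^2 < ?M$1$1 * ?M$2$2"
    using two_le_num_pos_eigenvalues2_if_pos_def[of ?M] entries by fastforce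
  then show ?thesis unfolding entries by (simp add: power2_eq_square mult.commute)
qed

locale log_concave_seq =
  fixes b :: "nat \<Rightarrow> real" and d :: nat
  assumes pos: "\<And>i. i \<le> d \<Longrightarrow> 0 < b i"
    and log_concave: "\<And>j. j + 2 \<le> d \<Longrightarrow> b j * b (j + 2) \<le> b (j + 1)^2"
begin

text \<open>The ratios b (k + 1) / b k decrease, written without division.\<close>
lemma ratio_antimono: "k \<le> m \<Longrightarrow> m + 1 \<le> d \<Longrightarrow> b (m + 1) * b k \<le> b m * b (k + 1)"
proof (induction m rule: dec_induct)
  case base
  then show ?case by simp
next
  case (step m)
  then have IH: "b (m + 1) * b k \<le> b m * b (k + 1)" by simp
  have "b m * (b (m + 2) * b k) = (b m * b (m + 2)) * b k" by (simp add: algebra_simps)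
  also have "\<dots> \<le> b (m + 1)^2 * b k"
    using log_concave[of m] pos[of k] step by (intro mult_right_mono) auto
  also have "\<dots> = b (m + 1) * (b (m + 1) * b k)" by (simp add: power2_eq_square)
  also have "\<dots> \<le> b (m + 1) * (b m * b (k + 1))"
    using IH pos[of "m + 1"] step by (intro mult_left_mono) auto
  also have "\<dots> = b m * (b (m + 1) * b (k + 1))" by simp
  finally show ?case using pos[of m] step by simp
qed

lemma min_endpoints_le: assumes "i \<le> d" shows "min (b 0) (b d) \<le> b i"
proof (cases i)
  case 0
  then show ?thesis by simp
next
  case (Suc m)
  show ?thesis
  proof (cases "b m \<le> b i")
    case True
    have "b k \<le> b (Suc k)" if "k < i" for k
    proof -
      have "b m * b k \<le> b i * b k" using True pos[of k] that assms by (intro mult_right_mono) auto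
      also have "\<dots> \<le> b m * b (Suc k)" using ratio_antimono[of k m] that assms Suc by simp
      finally show ?thesis using pos[of m] Suc assms by simp
    qed
    then have "b 0 \<le> b i" by (rule lift_Suc_mono_le_ivl[where N = "{..<i}"]) auto
    then show ?thesis by simp
  next
    case False
    have "b (Suc n) \<le> b n" if "i \<le> n" "n < d" for n
    proof -
      have "b (Suc n) * b m \<le> b n * b i" using ratio_antimono[of m n] that Suc by simp
      also have "\<dots> \<le> b n * b m" using False pos[of n] that by (intro mult_left_mono) auto
      finally show ?thesis using pos[of m] Suc assms by simp
    qed
    then have "b d \<le> b i" using assms by (rule lift_Suc_antimono_le_ivl[where N = "{i..<d}"]) auto
    then show ?thesis by simp
  qed
qed

text \<open>Multiplying the ratio inequalities b (i + 1) / b i \<le> b (k + 1) / b k for k < i.\<close>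
lemma power_succ_mult_first_le: assumes "i + 1 \<le> d" shows "b (i + 1) ^ i * b 0 \<le> b i ^ (i + 1)"
proof -
  have "b (i + 1) ^ k * b 0 \<le> b k * b i ^ k" if "k \<le> i" for k
    using that
  proof (induction k)
    case 0
    then show ?case by simp
  next
    case (Suc k)
    then have IH: "b (i + 1) ^ k * b 0 \<le> b k * b i ^ k" by simp
    have "b (i + 1) ^ Suc k * b 0 = b (i + 1) * (b (i + 1) ^ k * b 0)" by simp
    also have "\<dots> \<le> b (i + 1) * (b k * b i ^ k)"
      using IH pos[of "i + 1"] assms by (intro mult_left_mono) auto
    also have "\<dots> = (b (i + 1) * b k) * b i ^ k" by simp
    also have "\<dots> \<le> (b i * b (k + 1)) * b i ^ k"
      using ratio_antimono[of k i] Suc pos[of i] assms by (intro mult_right_mono) auto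
    also have "\<dots> = b (Suc k) * b i ^ Suc k" by simp
    finally show ?case .
  qed
  from this[of i] show ?thesis by (simp add: mult.commute)
qed

end

lemma scaled_coeff_gchoose: "scaled_coeff d (\<lambda>i. x i gchoose i) i = ffact (x i) i * fact (d - i)"
  by (simp add: scaled_coeff_def gbinomial_mult_fact_eq_ffact)

lemma of_nat_le_if_fact_le_ffact:
  assumes "1 \<le> i" "i \<le> d" "real i - 1 \<le> y" and le: "fact d \<le> ffact y i * fact (d - i)"
  shows "real d \<le> y"
proof (rule ccontr)
  assume "\<not> real d \<le> y"
  then have "ffact y i < ffact (real d) i" using assms by (intro ffact_strict_mono) auto
  then have "ffact y i * fact (d - i) < fact d"
    using ffact_of_nat_mult_fact[OF \<open>i \<le> d\<close>] by (metis fact_gt_zero mult_strict_right_mono)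
  with le show False by simp
qed

lemma power_ffact_mult_fact_less:
  assumes "1 \<le> i" "i < d" "real d \<le> y" "y < z"
  shows "(ffact y i * fact (d - i)) ^ (i + 1) < (ffact z (i + 1) * fact (d - (i + 1))) ^ i * fact d"
proof -
  define Q F c e where "Q = ffact y i" and "F = (fact (d - (i + 1)) :: real)"
    and "c = y - real i" and "e = real d - real i"
  have "0 < Q" "0 < c" "0 < e" "0 < F" using assms unfolding Q_def c_def e_def F_def
    by (auto intro: ffact_pos)
  have fact_d_i: "fact (d - i) = e * F"
    using assms unfolding e_def F_def by (simp add: fact_reduce[of "d - i"] of_nat_diff diff_diff_left)
  have fact_d: "fact d = ffact (real d) i * e * F"
    using ffact_of_nat_mult_fact[of i d] assms fact_d_i by simp
  have "Q * c < ffact z (i + 1)"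
    using ffact_strict_mono[of "i + 1" y z] assms unfolding Q_def c_def by (simp add: ffact_Suc)
  then have less: "(Q * c * F) ^ i < (ffact z (i + 1) * F) ^ i"
    using \<open>0 < Q\<close> \<open>0 < c\<close> \<open>0 < F\<close> \<open>1 \<le> i\<close> by (intro power_strict_mono mult_strict_right_mono) auto
  have "(ffact y i * fact (d - i)) ^ (i + 1) = (Q^i * F^i * e * F) * (Q * e^i)"
    unfolding Q_def[symmetric] fact_d_i by (simp add: power_mult_distrib algebra_simps)
  also have "\<dots> \<le> (Q^i * F^i * e * F) * (c^i * ffact (real d) i)"
    using ffact_mult_power_le[of "real d" y i i] assms \<open>0 < Q\<close> \<open>0 < e\<close> \<open>0 < F\<close>
    unfolding Q_def c_def e_def by (intro mult_left_mono) auto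
  also have "\<dots> = (Q * c * F) ^ i * fact d"
    unfolding fact_d by (simp add: power_mult_distrib algebra_simps)
  also have "\<dots> < (ffact z (i + 1) * F) ^ i * fact d"
    using less by (intro mult_strict_right_mono) auto
  finally show ?thesis unfolding F_def .
qed

theorem mainTheorem4:
  fixes d :: nat and x :: "nat \<Rightarrow> real"
  assumes "d \<ge> 2"
    and "\<forall>i\<in>{1..d}. x i \<ge> real i - 1"
    and "\<forall>i\<in>{1..d}. x i gchoose i > 0"
    and "x d \<ge> real d"
    and "lorentzian2 d (\<lambda>i. if i = 0 then 1 else x i gchoose i)"
  shows "\<forall>i\<in>{1..<d}. x i \<ge> x (Suc i)"
proof -
  have coeffs: "(\<lambda>i. if i = 0 then 1 else x i gchoose i) = (\<lambda>i. x i gchoose i)" by auto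
  define b where "b = scaled_coeff d (\<lambda>i. x i gchoose i)"
  have b_eq: "b i = ffact (x i) i * fact (d - i)" for i
    unfolding b_def by (rule scaled_coeff_gchoose)
  interpret log_concave_seq b d
  proof
    show "0 < b i" if "i \<le> d" for i
      using assms(3) that unfolding b_def scaled_coeff_def by (cases "i = 0") auto
    show "b j * b (j + 2) \<le> b (j + 1)^2" if "j + 2 \<le> d" for j
      using lorentzian2_log_concave[OF assms(5)[unfolded coeffs] that] unfolding b_def .
  qed
  have "b 0 \<le> b d"
    using ffact_mono[of d "real d" "x d"] ffact_of_nat_mult_fact[of d d] assms(4) by (simp add: b_eq)
  then have x_ge: "real d \<le> x i" if "1 \<le> i" "i \<le> d" for i
    using min_endpoints_le[OF that(2)] assms(2) that
    by (intro of_nat_le_if_fact_le_ffact[of i d]) (auto simp: b_eq)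
  show ?thesis
  proof (intro ballI leI notI)
    fix i assume i: "i \<in> {1..<d}" and "x i < x (Suc i)"
    then have "b i ^ (i + 1) < b (i + 1) ^ i * b 0"
      using power_ffact_mult_fact_less[of i d "x i" "x (Suc i)"] x_ge[of i] by (simp add: b_eq)
    with power_succ_mult_first_le[of i] i show False by simp
  qed
qed

end
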